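(* For every $n\ge-1$, the polygraph freely generating $\mathcal O_n$ is atomic: for every $m$-generator $x$ of it and every $0\le i<m$, the supports of $[s_i(x)]$ and $[t_i(x)]$ in $\lambda(\mathcal O_n)_i$ are disjoint.
   Context: All $\omega$-categories are strict and globular; $s_i(x),t_i(x)$ are iterated $i$-sources/targets. A polygraph $S$ consists of sets $S_n$ of $n$-generators with source/target maps from $S_{n+1}$ to $n$-cells of the free $n$-category on $S_0,\dots,S_n$; $S^*$ is the free $\omega$-category. An expansion on an $\omega$-category $C$ consists of a $0$-cell $o$ and, for each $k$-cell $x$, a $(k+1)$-cell $\xi_x$ with $\xi_x:o\to x$ if $k=0$ and $\xi_x:\xi_{t(x)}\to x\star_0\xi_{s_0(x)}\star_1\cdots\star_{k-1}\xi_{s_{k-1}(x)}$ if $k>0$ (composites bracketed giving priority to lowest-dimensional composition), satisfying $\xi_{y\star_p x}=t_{p+1}(y)\star_0\xi_{s_0(x)}\star_1\cdots\star_{p-1}\xi_{s_{p-1}(x)}\star_p\xi_x\star_{p+1}\xi_y$, $\xi_{1_u}=1_{\xi_u}$, $\xi_{\xi_u}=1_{\xi_u}$, $\xi_o=1_o$. $T=UF$ is the monad induced by the forgetful functor $U$ from $\omega$-categories with expansion to $\omega\mathbf{Cat}$ and its left adjoint $F$, with unit $\eta$. For a polygraph $S$, $T(S^* )$ is freely generated by the polygraph whose $n$-generators are $\eta(a)$ ($a\in S_n$), together with the origin $o$ if $n=0$ and $\xi_{\eta(a)}$ ($a\in S_{n-1}$) if $n\ge1$. $\mathcal O_n=T^{n+1}(\emptyset)$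 ($\mathcal O_{-1}=\emptyset$), and its generating polygraph is obtained by iterating this construction $n+1$ times from the empty polygraph. For a polygraph $S$, $\lambda(S^* )_k$ is the free abelian group on $k$-cells of $S^*$ modulo $x\star_j y-x-y$; it is free abelian on the classes $[x]$ of $k$-generators; the support of an element is the set of generators with nonzero coefficient. A polygraph is atomic if for every $m$-generator $x$ and $0\le i<m$, the supports of $[s_i(x)]$ and $[t_i(x)]$ are disjoint. *)

theory Defs
  imports Main
begin

text \<open>Generators of the polygraph generating T(S*) are o, eta(a), xi_eta(a) for a a
generator of S.  Since the generating polygraph of O_n is obtained by iterating this
construction from the empty polygraph, all its generators are values of the following
datatype.\<close>

datatype gen = Orig | Eta gen | XiEta gen

fun gdim :: "gen \<Rightarrow> nat" where
  "gdim Orig = 0"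
| "gdim (Eta a) = gdim a"
| "gdim (XiEta a) = Suc (gdim a)"

text \<open>A composite whose
operands have different dimensions denotes the whiskered composite, the lower-dimensional
operand being promoted by identities.  Comp p y x denotes y \<star>_p x (so its p-source is
the p-source of x).  Every cell of S* is denoted by such a term; all functions below
(iterated sources/targets, expansion, abelian class) are compatible with the
omega-category axioms, so they are well defined on cells.\<close>

datatype 'g tm = Gen 'g | Id "'g tm" | Comp nat "'g tm" "'g tm"

fun tdim :: "gen tm \<Rightarrow> nat" where
  "tdim (Gen g) = gdim g"
| "tdim (Id u) = Suc (tdim u)"
| "tdim (Comp p y x) = max (tdim y) (tdim x)"

text \<open>Iterated i-source / i-target, given the source (resp. target) of each generator.
The first argument is a fuel bound (the dimension of the term suffices).\<close>

fun srcF :: "(gen \<Rightarrow> gen tm) \<Rightarrow> nat \<Rightarrow> nat \<Rightarrow> gen tm \<Rightarrow> gen tm" where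
  "srcF gs 0 i t = t"
| "srcF gs (Suc n) i (Gen g) =
     (if gdim g \<le> i then Gen g else srcF gs n i (gs g))"
| "srcF gs (Suc n) i (Id u) =
     (if tdim (Id u) \<le> i then Id u else srcF gs (Suc n) i u)"
| "srcF gs (Suc n) i (Comp p y x) =
     (if tdim (Comp p y x) \<le> i then Comp p y x
      else if i \<le> p then srcF gs (Suc n) i x
      else Comp p (srcF gs (Suc n) i y) (srcF gs (Suc n) i x))"

fun tgtF :: "(gen \<Rightarrow> gen tm) \<Rightarrow> nat \<Rightarrow> nat \<Rightarrow> gen tm \<Rightarrow> gen tm" where
  "tgtF gt 0 i t = t"
| "tgtF gt (Suc n) i (Gen g) =
     (if gdim g \<le> i then Gen g else tgtF gt n i (gt g))"
| "tgtF gt (Suc n) i (Id u) =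
     (if tdim (Id u) \<le> i then Id u else tgtF gt (Suc n) i u)"
| "tgtF gt (Suc n) i (Comp p y x) =
     (if tdim (Comp p y x) \<le> i then Comp p y x
      else if i \<le> p then tgtF gt (Suc n) i y
      else Comp p (tgtF gt (Suc n) i y) (tgtF gt (Suc n) i x))"

definition src :: "(gen \<Rightarrow> gen tm) \<Rightarrow> nat \<Rightarrow> gen tm \<Rightarrow> gen tm" where
  "src gs i t = srcF gs (tdim t) i t"

definition tgt :: "(gen \<Rightarrow> gen tm) \<Rightarrow> nat \<Rightarrow> gen tm \<Rightarrow> gen tm" where
  "tgt gt i t = tgtF gt (tdim t) i t"

abbreviation etaT :: "gen tm \<Rightarrow> gen tm" where
  "etaT \<equiv> map_tm Eta"

text \<open>The expansion xi of T(S*) evaluated at eta(u), for u a term of S*, computed from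
the expansion axioms:
 xi_{eta b} is the generator XiEta b, xi_{1_u} = 1_{xi_u}, and
 xi_{y \<star>_p x} = t_{p+1}(y) \<star>_0 xi_{s_0 x} \<star>_1 ... \<star>_{p-1} xi_{s_{p-1} x} \<star>_p xi_x \<star>_{p+1} xi_y
(bracketed giving priority to the lowest-dimensional composition, i.e. left-nested).
The natural number is a fuel bound (Suc of the dimension suffices).\<close>

fun xiS :: "(gen \<Rightarrow> gen tm) \<Rightarrow> (gen \<Rightarrow> gen tm) \<Rightarrow> nat \<Rightarrow> gen tm \<Rightarrow> gen tm" where
  "xiS gs gt 0 u = u"
| "xiS gs gt (Suc f) (Gen b) = Gen (XiEta b)"
| "xiS gs gt (Suc f) (Id u) = Id (xiS gs gt (Suc f) u)"
| "xiS gs gt (Suc f) (Comp p y x) =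
     Comp (Suc p)
       (Comp p
          (foldl (\<lambda>acc j. Comp j acc (xiS gs gt f (src gs j x)))
                 (etaT (tgt gt (Suc p) y)) [0..<p])
          (xiS gs gt (Suc f) x))
       (xiS gs gt (Suc f) y)"

definition xiT :: "(gen \<Rightarrow> gen tm) \<Rightarrow> (gen \<Rightarrow> gen tm) \<Rightarrow> gen tm \<Rightarrow> gen tm" where
  "xiT gs gt u = xiS gs gt (Suc (tdim u)) u"

text \<open>A polygraph: its set of generators (with dimension gdim), and the source and
target of each generator of positive dimension, as a term of the free category.\<close>

type_synonym polygraph = "gen set \<times> (gen \<Rightarrow> gen tm) \<times> (gen \<Rightarrow> gen tm)"

definition gens :: "polygraph \<Rightarrow> gen set" where "gens P = fst P"
definition gsrc :: "polygraph \<Rightarrow> gen \<Rightarrow> gen tm" where "gsrc P = fst (snd P)"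
definition gtgt :: "polygraph \<Rightarrow> gen \<Rightarrow> gen tm" where "gtgt P = snd (snd P)"

text \<open>Generating polygraph of T(S*):  n-generators eta(a) (a in S_n), o (n = 0) and
xi_{eta(a)} (a in S_{n-1}), with
 eta(a) : eta(s a) \<rightarrow> eta(t a),
 xi_{eta a} : o \<rightarrow> eta a  if a is a 0-generator,
 xi_{eta a} : xi_{t(eta a)} \<rightarrow> eta a \<star>_0 xi_{s_0(eta a)} \<star>_1 ... \<star>_{k-1} xi_{s_{k-1}(eta a)}
   if a is a k-generator, k > 0.\<close>

definition Tstep :: "polygraph \<Rightarrow> polygraph" where
  "Tstep P =
    (let G = gens P; gs = gsrc P; gt = gtgt P in
     (insert Orig (Eta ` G \<union> XiEta ` G),
      (\<lambda>g. case g of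
          Orig \<Rightarrow> undefined
        | Eta a \<Rightarrow> etaT (gs a)
        | XiEta a \<Rightarrow> (if gdim a = 0 then Gen Orig
                      else xiT gs gt (gt a))),
      (\<lambda>g. case g of
          Orig \<Rightarrow> undefined
        | Eta a \<Rightarrow> etaT (gt a)
        | XiEta a \<Rightarrow>
            foldl (\<lambda>acc j. Comp j acc (xiT gs gt (src gs j (Gen a))))
                  (Gen (Eta a)) [0..<gdim a])))"

definition empty_polygraph :: polygraph where
  "empty_polygraph = ({}, (\<lambda>_. undefined), (\<lambda>_. undefined))"

text \<open>Generating polygraph of O_n = T^{n+1}(\<emptyset>), for n \<ge> -1.\<close>

definition O_polygraph :: "int \<Rightarrow> polygraph" where
  "O_polygraph n = (Tstep ^^ nat (n + 1)) empty_polygraph"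

text \<open>Coefficients of the class [t] of a k-cell t in lambda(S*)_k, the free abelian group
on the k-generators: generators count 1, identities count 0, composites add.\<close>

fun cls :: "nat \<Rightarrow> gen tm \<Rightarrow> gen \<Rightarrow> int" where
  "cls k (Gen g) = (\<lambda>h. if gdim g = k \<and> h = g then 1 else 0)"
| "cls k (Id u) = (\<lambda>h. 0)"
| "cls k (Comp p y x) = (\<lambda>h. cls k y h + cls k x h)"

definition supp :: "(gen \<Rightarrow> int) \<Rightarrow> gen set" where
  "supp c = {g. c g \<noteq> 0}"

definition atomic :: "polygraph \<Rightarrow> bool" where
  "atomic P \<longleftrightarrow>
    (\<forall>x \<in> gens P. \<forall>i < gdim x.
       supp (cls i (src (gsrc P) i (Gen x))) \<inter> supp (cls i (tgt (gtgt P) i (Gen x))) = {})"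

end

theory Submission
  imports Defs
begin

text \<open>
  Atomicity is preserved by the step S \<mapsto> generating polygraph of T(S*), so the theorem
  follows by induction on n, starting from the empty polygraph.  For the generators eta(a)
  this is clear: eta is injective on generators and commutes with sources and targets.
  For xi_{eta a}, with a a k-generator and i \<le> k, the cell equations of the expansion give
  s_i(xi_{eta a}) = xi_{t_{i-1}(a)} (or o when i = 0) and
  t_i(xi_{eta a}) = t_i(eta a) *_0 xi_{s_0 a} *_1 ... *_{i-1} xi_{s_{i-1} a}.
  Hence the i-generators in the support of the source are o and the xi_{eta b} with b in the
  support of [t_{i-1}(a)], while those of the target are eta-generators and the xi_{eta b}
  with b in the support of [s_{i-1}(a)].  A common generator would thus be xi_{eta b} with b
  in both supports, contradicting the atomicity of S.
\<close>

section \<open>Well-formed terms and supports of classes\<close>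

fun tm_gens :: "'g tm \<Rightarrow> 'g set" where
  "tm_gens (Gen g) = {g}"
| "tm_gens (tm.Id u) = tm_gens u"
| "tm_gens (Comp p y x) = tm_gens y \<union> tm_gens x"

fun wf_tm :: "gen tm \<Rightarrow> bool" where
  "wf_tm (Gen g) = True"
| "wf_tm (tm.Id u) = wf_tm u"
| "wf_tm (Comp p y x) = (p < tdim y \<and> p < tdim x \<and> wf_tm y \<and> wf_tm x)"

definition wf_boundary :: "gen set \<Rightarrow> (gen \<Rightarrow> gen tm) \<Rightarrow> bool" where
  "wf_boundary G h \<longleftrightarrow>
    (\<forall>g\<in>G. 0 < gdim g \<longrightarrow> tdim (h g) = gdim g - 1 \<and> wf_tm (h g) \<and> tm_gens (h g) \<subseteq> G)"

lemma wf_boundaryD: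
  assumes "wf_boundary G h" "g \<in> G" "0 < gdim g"
  shows "tdim (h g) = gdim g - 1" "wf_tm (h g)" "tm_gens (h g) \<subseteq> G"
  using assms unfolding wf_boundary_def by auto

lemma cls_nonneg: "cls k t g \<ge> 0"
  by (induction t) auto

lemma supp_cls_Gen [simp]: "supp (cls k (Gen g)) = (if gdim g = k then {g} else {})"
  by (auto simp: supp_def)

lemma supp_cls_Id [simp]: "supp (cls k (tm.Id u)) = {}"
  by (simp add: supp_def)

lemma supp_cls_Comp [simp]: "supp (cls k (Comp p y x)) = supp (cls k y) \<union> supp (cls k x)"
  using cls_nonneg[of k y] cls_nonneg[of k x] by (auto simp: supp_def add_nonneg_eq_0_iff)

declare cls.simps [simp del]

lemma gdim_supp_cls: "g \<in> supp (cls k t) \<Longrightarrow> gdim g = k"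
  by (induction t) (auto split: if_splits)

lemma supp_cls_low_dim: "tdim t < k \<Longrightarrow> supp (cls k t) = {}"
  by (induction t) auto

lemma tdim_etaT [simp]: "tdim (etaT t) = tdim t"
  by (induction t) auto

lemma wf_tm_etaT [simp]: "wf_tm (etaT t) = wf_tm t"
  by (induction t) auto

lemma tm_gens_etaT [simp]: "tm_gens (etaT t) = Eta ` tm_gens t"
  by (induction t) auto

lemma supp_cls_etaT [simp]: "supp (cls k (etaT t)) = Eta ` supp (cls k t)"
  by (induction t) auto

section \<open>Iterated sources and targets\<close>

text \<open>srcF and tgtF differ only in which operand of a composite they descend into, so both
  are instances of one boundary operator.\<close>

fun bdryF :: "bool \<Rightarrow> (gen \<Rightarrow> gen tm) \<Rightarrow> nat \<Rightarrow> nat \<Rightarrow> gen tm \<Rightarrow> gen tm" where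
  "bdryF s h 0 i t = t"
| "bdryF s h (Suc n) i (Gen g) =
     (if gdim g \<le> i then Gen g else bdryF s h n i (h g))"
| "bdryF s h (Suc n) i (tm.Id u) =
     (if tdim (tm.Id u) \<le> i then tm.Id u else bdryF s h (Suc n) i u)"
| "bdryF s h (Suc n) i (Comp p y x) =
     (if tdim (Comp p y x) \<le> i then Comp p y x
      else if i \<le> p then bdryF s h (Suc n) i (if s then x else y)
      else Comp p (bdryF s h (Suc n) i y) (bdryF s h (Suc n) i x))"

definition bdry :: "bool \<Rightarrow> (gen \<Rightarrow> gen tm) \<Rightarrow> nat \<Rightarrow> gen tm \<Rightarrow> gen tm" where
  "bdry s h i t = bdryF s h (tdim t) i t"

lemma srcF_eq_bdryF: "srcF h n i t = bdryF True h n i t"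
  by (induction h n i t rule: srcF.induct) auto

lemma tgtF_eq_bdryF: "tgtF h n i t = bdryF False h n i t"
  by (induction h n i t rule: tgtF.induct) auto

lemma src_eq_bdry: "src = bdry True"
  by (intro ext) (simp add: src_def bdry_def srcF_eq_bdryF)

lemma tgt_eq_bdry: "tgt = bdry False"
  by (intro ext) (simp add: tgt_def bdry_def tgtF_eq_bdryF)

lemma bdryF_triv: "tdim t \<le> i \<Longrightarrow> bdryF s h n i t = t"
  by (cases n; cases t) auto

lemma bdry_triv: "tdim t \<le> i \<Longrightarrow> bdry s h i t = t"
  by (simp add: bdry_def bdryF_triv)

lemma bdryF_Suc:
  assumes h: "wf_boundary G h"
  shows "tm_gens t \<subseteq> G \<Longrightarrow> tdim t \<le> n \<Longrightarrow> bdryF s h (Suc n) i t = bdryF s h n i t"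
proof (induction n arbitrary: t)
  case 0
  then show ?case by (simp add: bdryF_triv)
next
  case (Suc n)
  show ?case using Suc.prems
  proof (induction t)
    case (Gen g)
    show ?case
    proof (cases "gdim g \<le> i")
      case False
      then show ?thesis using Gen Suc.IH[of "h g"] wf_boundaryD[OF h] by simp
    qed simp
  qed auto
qed

lemma bdryF_eq_bdry:
  assumes "wf_boundary G h" "tm_gens t \<subseteq> G" "tdim t \<le> n"
  shows "bdryF s h n i t = bdry s h i t"
  using assms(3)
proof (induction n rule: dec_induct)
  case base
  then show ?case by (simp add: bdry_def)
next
  case (step n)
  then show ?case using bdryF_Suc[OF assms(1,2)] by simp
qed

lemma bdryF_wf:
  assumes h: "wf_boundary G h"
  shows "tm_gens t \<subseteq> G \<Longrightarrow> wf_tm t \<Longrightarrow> tdim t \<le> n \<Longrightarrow>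
    tdim (bdryF s h n i t) = min i (tdim t) \<and> wf_tm (bdryF s h n i t) \<and> tm_gens (bdryF s h n i t) \<subseteq> G"
proof (induction n arbitrary: t)
  case 0
  then show ?case by simp
next
  case (Suc n)
  show ?case using Suc.prems
  proof (induction t)
    case (Gen g)
    show ?case
    proof (cases "gdim g \<le> i")
      case False
      then show ?thesis using Gen Suc.IH[of "h g"] wf_boundaryD[OF h] by simp
    qed (use Gen in simp)
  next
    case (Comp p y x)
    then have "tdim y \<le> Suc n" "tdim x \<le> Suc n" by auto
    with Comp show ?case by (cases s) (auto simp: min_def max_def)
  qed (auto simp: min_def max_def)
qed

lemma bdry_wf:
  assumes "wf_boundary G h" "tm_gens t \<subseteq> G" "wf_tm t"
  shows "tdim (bdry s h i t) = min i (tdim t)" "wf_tm (bdry s h i t)" "tm_gens (bdry s h i t) \<subseteq> G"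
  using bdryF_wf[OF assms] by (auto simp: bdry_def)

lemma bdry_Gen:
  assumes "wf_boundary G h" "g \<in> G"
  shows "bdry s h i (Gen g) = (if gdim g \<le> i then Gen g else bdry s h i (h g))"
proof (cases "gdim g \<le> i")
  case False
  then obtain n where "gdim g = Suc n" by (cases "gdim g") auto
  with False show ?thesis
    using bdryF_eq_bdry[OF assms(1), of "h g" n] wf_boundaryD[OF assms] by (simp add: bdry_def)
qed (simp add: bdry_triv)

lemma bdry_Id:
  assumes "wf_boundary G h" "tm_gens u \<subseteq> G"
  shows "bdry s h i (tm.Id u) = (if tdim (tm.Id u) \<le> i then tm.Id u else bdry s h i u)"
  using bdryF_eq_bdry[OF assms, of "tdim (tm.Id u)"] by (simp add: bdry_def)

lemma bdry_Comp:
  assumes "wf_boundary G h" "tm_gens y \<subseteq> G" "tm_gens x \<subseteq> G"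
  shows "bdry s h i (Comp p y x) = (if tdim (Comp p y x) \<le> i then Comp p y x
      else if i \<le> p then bdry s h i (if s then x else y)
      else Comp p (bdry s h i y) (bdry s h i x))"
proof (cases "tdim (Comp p y x) \<le> i")
  case False
  then obtain n where n: "tdim (Comp p y x) = Suc n" by (cases "tdim (Comp p y x)") auto
  then have "tdim x \<le> Suc n" "tdim y \<le> Suc n" by auto
  with False n show ?thesis
    using bdryF_eq_bdry[OF assms(1,2), of "Suc n"] bdryF_eq_bdry[OF assms(1,3), of "Suc n"]
    by (simp add: bdry_def del: tdim.simps)
qed (simp add: bdry_triv)

lemma supp_cls_bdry_Comp:
  assumes "wf_boundary G h" "tm_gens y \<subseteq> G" "tm_gens x \<subseteq> G"
  shows "supp (cls k (bdry s h i (Comp p y x))) \<subseteq> supp (cls k (bdry s h i y)) \<union> supp (cls k (bdry s h i x))"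
  using bdry_Comp[OF assms, of s i p] bdry_triv[of y i s h] bdry_triv[of x i s h]
  by (auto split: if_splits)

lemma bdry_etaT:
  assumes "\<And>a. h' (Eta a) = etaT (h a)"
  shows "bdry s h' i (etaT t) = etaT (bdry s h i t)"
proof -
  have "\<forall>a. h' (Eta a) = etaT (h a) \<Longrightarrow> bdryF s h' n i (etaT t) = etaT (bdryF s h n i t)" for n
    by (induction s h n i t rule: bdryF.induct) auto
  then show ?thesis by (simp add: bdry_def assms)
qed

lemmas src_triv = bdry_triv[where s = True, folded src_eq_bdry]
lemmas src_wf = bdry_wf[where s = True, folded src_eq_bdry]
lemmas src_Gen = bdry_Gen[where s = True, folded src_eq_bdry]
lemmas src_Id = bdry_Id[where s = True, folded src_eq_bdry]
lemmas src_Comp = bdry_Comp[where s = True, unfolded if_True, folded src_eq_bdry]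
lemmas supp_cls_src_Comp = supp_cls_bdry_Comp[where s = True, folded src_eq_bdry]
lemmas src_etaT = bdry_etaT[where s = True, folded src_eq_bdry]

lemmas tgt_triv = bdry_triv[where s = False, folded tgt_eq_bdry]
lemmas tgt_wf = bdry_wf[where s = False, folded tgt_eq_bdry]
lemmas tgt_Gen = bdry_Gen[where s = False, folded tgt_eq_bdry]
lemmas tgt_Id = bdry_Id[where s = False, folded tgt_eq_bdry]
lemmas tgt_Comp = bdry_Comp[where s = False, unfolded if_False, folded tgt_eq_bdry]
lemmas tgt_etaT = bdry_etaT[where s = False, folded tgt_eq_bdry]

section \<open>The expansion on eta-images\<close>

abbreviation whiskers :: "(nat \<Rightarrow> gen tm) \<Rightarrow> gen tm \<Rightarrow> nat list \<Rightarrow> gen tm" where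
  "whiskers c a js \<equiv> foldl (\<lambda>acc j. Comp j acc (c j)) a js"

lemma tdim_whiskers: "(\<And>j. j \<in> set js \<Longrightarrow> tdim (c j) \<le> tdim a) \<Longrightarrow> tdim (whiskers c a js) = tdim a"
  by (induction js arbitrary: a) auto

lemma wf_tm_whiskers:
  "wf_tm a \<Longrightarrow> \<forall>j\<in>set js. wf_tm (c j) \<and> j < tdim (c j) \<and> j < tdim a \<Longrightarrow>
    wf_tm (whiskers c a js)"
proof (induction js arbitrary: a)
  case (Cons j js)
  have "wf_tm (Comp j a (c j))"
    and "\<forall>j'\<in>set js. wf_tm (c j') \<and> j' < tdim (c j') \<and> j' < tdim (Comp j a (c j))"
    using Cons.prems by auto
  then show ?case using Cons.IH by simp
qed simp

lemma tm_gens_whiskers: "tm_gens (whiskers c a js) = tm_gens a \<union> (\<Union>j\<in>set js. tm_gens (c j))"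
  by (induction js arbitrary: a) auto

lemma supp_cls_whiskers:
  "supp (cls k (whiskers c a js)) = supp (cls k a) \<union> (\<Union>j\<in>set js. supp (cls k (c j)))"
  by (induction js arbitrary: a) auto

text \<open>The whisker c j has dimension j + 1, so it is its own i-target when j < i and does
  not contribute to the i-target when j \<ge> i.\<close>

lemma supp_cls_tgt_whiskers:
  assumes h: "wf_boundary G h" and "tm_gens a \<subseteq> G"
    and "\<And>j. j \<in> set js \<Longrightarrow> tm_gens (c j) \<subseteq> G \<and> tdim (c j) = Suc j"
  shows "supp (cls k (tgt h i (whiskers c a js))) \<subseteq>
     supp (cls k (tgt h i a)) \<union> (\<Union>j\<in>{j\<in>set js. j < i}. supp (cls k (c j)))"
  using assms(2,3)
proof (induction js arbitrary: a)
  case (Cons j js)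
  have cj: "tm_gens (c j) \<subseteq> G" "tdim (c j) = Suc j" using Cons.prems by auto
  have "supp (cls k (tgt h i (Comp j a (c j)))) \<subseteq>
      supp (cls k (tgt h i a)) \<union> (if j < i then supp (cls k (c j)) else {})"
    using tgt_Comp[OF h Cons.prems(1) cj(1), of i j] cj(2) tgt_triv[of a i h] tgt_triv[of "c j" i h]
    by (auto split: if_splits)
  moreover have "supp (cls k (tgt h i (whiskers c (Comp j a (c j)) js))) \<subseteq>
      supp (cls k (tgt h i (Comp j a (c j)))) \<union> (\<Union>j\<in>{j\<in>set js. j < i}. supp (cls k (c j)))"
    using Cons.IH[of "Comp j a (c j)"] Cons.prems by auto
  ultimately show ?case by (auto split: if_splits)
qed simp

lemma xiS_wf:
  "wf_boundary G gs \<Longrightarrow> wf_boundary G gt \<Longrightarrow> tm_gens u \<subseteq> G \<Longrightarrow> wf_tm u \<Longrightarrow> tdim u < f \<Longrightarrow>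
   tdim (xiS gs gt f u) = Suc (tdim u) \<and> wf_tm (xiS gs gt f u) \<and>
   tm_gens (xiS gs gt f u) \<subseteq> Eta ` G \<union> XiEta ` G"
proof (induction gs gt f u rule: xiS.induct)
  case (4 gs gt f p y x)
  let ?c = "\<lambda>j. xiS gs gt f (src gs j x)" and ?a = "etaT (tgt gt (Suc p) y)"
  have yx: "tm_gens y \<subseteq> G" "tm_gens x \<subseteq> G" "wf_tm y" "wf_tm x" "p < tdim y" "p < tdim x"
    "tdim y \<le> f" "tdim x \<le> f"
    using "4.prems" by auto
  have c: "tdim (?c j) = Suc j \<and> wf_tm (?c j) \<and> tm_gens (?c j) \<subseteq> Eta ` G \<union> XiEta ` G"
    if "j \<in> set [0..<p]" for j
    using "4.IH"(1)[of j] "4.prems"(1,2) src_wf[OF "4.prems"(1) yx(2,4), of j] that yx by auto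
  have a: "tdim ?a = Suc p" "wf_tm ?a" "tm_gens ?a \<subseteq> Eta ` G \<union> XiEta ` G"
    using tgt_wf[OF "4.prems"(2) yx(1,3), of "Suc p"] yx by auto
  have "tdim (whiskers ?c ?a [0..<p]) = Suc p"
    using c a by (subst tdim_whiskers) auto
  moreover have "wf_tm (whiskers ?c ?a [0..<p])"
    using c a by (intro wf_tm_whiskers) auto
  moreover have "tm_gens (whiskers ?c ?a [0..<p]) \<subseteq> Eta ` G \<union> XiEta ` G"
    using c a unfolding tm_gens_whiskers by blast
  moreover have "tdim (xiS gs gt (Suc f) x) = Suc (tdim x) \<and> wf_tm (xiS gs gt (Suc f) x) \<and>
      tm_gens (xiS gs gt (Suc f) x) \<subseteq> Eta ` G \<union> XiEta ` G"
    using "4.IH"(2) "4.prems"(1,2) yx by simp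
  moreover have "tdim (xiS gs gt (Suc f) y) = Suc (tdim y) \<and> wf_tm (xiS gs gt (Suc f) y) \<and>
      tm_gens (xiS gs gt (Suc f) y) \<subseteq> Eta ` G \<union> XiEta ` G"
    using "4.IH"(3) "4.prems"(1,2) yx by simp
  ultimately show ?case
    using yx by (auto simp: max_def)
qed auto

lemma xiS_supp_cls_top:
  "wf_boundary G gs \<Longrightarrow> wf_boundary G gt \<Longrightarrow> tm_gens u \<subseteq> G \<Longrightarrow> wf_tm u \<Longrightarrow> tdim u \<le> m \<Longrightarrow>
   supp (cls (Suc m) (xiS gs gt f u)) \<subseteq> XiEta ` supp (cls m u)"
proof (induction gs gt f u rule: xiS.induct)
  case (1 gs gt u)
  then show ?case using supp_cls_low_dim[of u "Suc m"] by simp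
next
  case (4 gs gt f p y x)
  have yx: "tm_gens y \<subseteq> G" "tm_gens x \<subseteq> G" "wf_tm y" "wf_tm x" "p < tdim y" "p < tdim x"
    "tdim y \<le> m" "tdim x \<le> m"
    using "4.prems" by auto
  have "supp (cls (Suc m) (xiS gs gt f (src gs j x))) = {}" if "j \<in> set [0..<p]" for j
  proof -
    have s: "tdim (src gs j x) = j" "wf_tm (src gs j x)" "tm_gens (src gs j x) \<subseteq> G"
      using src_wf[OF "4.prems"(1) yx(2,4), of j] that yx by auto
    then have "supp (cls m (src gs j x)) = {}"
      using that yx supp_cls_low_dim[of "src gs j x" m] by simp
    then show ?thesis using "4.IH"(1)[of j] "4.prems"(1,2) s that yx by auto
  qed
  moreover have "supp (cls (Suc m) (etaT (tgt gt (Suc p) y))) = {}"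
    using tgt_wf[OF "4.prems"(2) yx(1,3), of "Suc p"] yx supp_cls_low_dim by auto
  moreover have "supp (cls (Suc m) (xiS gs gt (Suc f) x)) \<subseteq> XiEta ` supp (cls m x)"
    using "4.IH"(2) "4.prems"(1,2) yx by simp
  moreover have "supp (cls (Suc m) (xiS gs gt (Suc f) y)) \<subseteq> XiEta ` supp (cls m y)"
    using "4.IH"(3) "4.prems"(1,2) yx by simp
  ultimately show ?case by (auto simp: supp_cls_whiskers)
qed auto

section \<open>Atomicity of T(S*)\<close>

lemma gens_Tstep: "gens (Tstep P) = insert Orig (Eta ` gens P \<union> XiEta ` gens P)"
  by (simp add: Tstep_def gens_def Let_def)

lemma gsrc_Tstep_Eta: "gsrc (Tstep P) (Eta a) = etaT (gsrc P a)"
  by (simp add: Tstep_def gsrc_def Let_def)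

lemma gtgt_Tstep_Eta: "gtgt (Tstep P) (Eta a) = etaT (gtgt P a)"
  by (simp add: Tstep_def gtgt_def Let_def)

lemma gsrc_Tstep_XiEta:
  "gsrc (Tstep P) (XiEta a) = (if gdim a = 0 then Gen Orig else xiT (gsrc P) (gtgt P) (gtgt P a))"
  by (simp add: Tstep_def gsrc_def gtgt_def Let_def)

lemma gtgt_Tstep_XiEta:
  "gtgt (Tstep P) (XiEta a) =
     whiskers (\<lambda>j. xiT (gsrc P) (gtgt P) (src (gsrc P) j (Gen a))) (Gen (Eta a)) [0..<gdim a]"
  by (simp add: Tstep_def gsrc_def gtgt_def Let_def)

lemma atomicD:
  assumes "atomic P" "x \<in> gens P" "i < gdim x"
  shows "supp (cls i (src (gsrc P) i (Gen x))) \<inter> supp (cls i (tgt (gtgt P) i (Gen x))) = {}"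
  using assms unfolding atomic_def by blast

locale wf_polygraph =
  fixes P :: polygraph
  assumes wf_gsrc: "wf_boundary (gens P) (gsrc P)"
    and wf_gtgt: "wf_boundary (gens P) (gtgt P)"
begin

lemma xiT_wf:
  assumes "tm_gens u \<subseteq> gens P" "wf_tm u"
  shows "tdim (xiT (gsrc P) (gtgt P) u) = Suc (tdim u)" "wf_tm (xiT (gsrc P) (gtgt P) u)"
    "tm_gens (xiT (gsrc P) (gtgt P) u) \<subseteq> gens (Tstep P)"
  using xiS_wf[OF wf_gsrc wf_gtgt assms] by (auto simp: xiT_def gens_Tstep)

lemma xiT_src_wf:
  assumes "a \<in> gens P" "j < gdim a"
  shows "tdim (xiT (gsrc P) (gtgt P) (src (gsrc P) j (Gen a))) = Suc j"
    "wf_tm (xiT (gsrc P) (gtgt P) (src (gsrc P) j (Gen a)))"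
    "tm_gens (xiT (gsrc P) (gtgt P) (src (gsrc P) j (Gen a))) \<subseteq> gens (Tstep P)"
  using src_wf[OF wf_gsrc, of "Gen a" j] xiT_wf[of "src (gsrc P) j (Gen a)"] assms by auto

lemma wf_boundary_gsrc_Tstep: "wf_boundary (gens (Tstep P)) (gsrc (Tstep P))"
  unfolding wf_boundary_def
proof (intro ballI impI)
  fix g assume g: "g \<in> gens (Tstep P)" "0 < gdim g"
  then consider a where "g = Eta a" "a \<in> gens P" | a where "g = XiEta a" "a \<in> gens P"
    by (auto simp: gens_Tstep)
  then show "tdim (gsrc (Tstep P) g) = gdim g - 1 \<and> wf_tm (gsrc (Tstep P) g) \<and>
      tm_gens (gsrc (Tstep P) g) \<subseteq> gens (Tstep P)"
  proof cases
    case 1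
    then show ?thesis using g wf_boundaryD[OF wf_gsrc, of a] by (auto simp: gsrc_Tstep_Eta gens_Tstep)
  next
    case 2
    then show ?thesis
      using wf_boundaryD[OF wf_gtgt, of a] xiT_wf[of "gtgt P a"]
      by (auto simp: gsrc_Tstep_XiEta gens_Tstep)
  qed
qed

lemma wf_boundary_gtgt_Tstep: "wf_boundary (gens (Tstep P)) (gtgt (Tstep P))"
  unfolding wf_boundary_def
proof (intro ballI impI)
  fix g assume g: "g \<in> gens (Tstep P)" "0 < gdim g"
  then consider a where "g = Eta a" "a \<in> gens P" | a where "g = XiEta a" "a \<in> gens P"
    by (auto simp: gens_Tstep)
  then show "tdim (gtgt (Tstep P) g) = gdim g - 1 \<and> wf_tm (gtgt (Tstep P) g) \<and>
      tm_gens (gtgt (Tstep P) g) \<subseteq> gens (Tstep P)"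
  proof cases
    case 1
    then show ?thesis using g wf_boundaryD[OF wf_gtgt, of a] by (auto simp: gtgt_Tstep_Eta gens_Tstep)
  next
    case 2
    let ?c = "\<lambda>j. xiT (gsrc P) (gtgt P) (src (gsrc P) j (Gen a))"
    have "tdim (whiskers ?c (Gen (Eta a)) [0..<gdim a]) = gdim a"
      using xiT_src_wf 2 by (subst tdim_whiskers) auto
    moreover have "wf_tm (whiskers ?c (Gen (Eta a)) [0..<gdim a])"
      using xiT_src_wf 2 by (intro wf_tm_whiskers) auto
    moreover have "Eta a \<in> gens (Tstep P)"
      using 2 by (simp add: gens_Tstep)
    then have "tm_gens (whiskers ?c (Gen (Eta a)) [0..<gdim a]) \<subseteq> gens (Tstep P)"
      using xiT_src_wf(3)[OF 2(2)] unfolding tm_gens_whiskers by (simp add: UN_subset_iff)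
    ultimately show ?thesis using 2 by (simp add: gtgt_Tstep_XiEta)
  qed
qed

lemma wf_polygraph_Tstep: "wf_polygraph (Tstep P)"
  using wf_boundary_gsrc_Tstep wf_boundary_gtgt_Tstep by (rule wf_polygraph.intro)

lemma supp_src_xiS_top:
  assumes "tm_gens u \<subseteq> gens P" "wf_tm u" "tdim u < f" "tdim u < i"
  shows "supp (cls i (src (gsrc (Tstep P)) i (xiS (gsrc P) (gtgt P) f u))) \<subseteq>
      XiEta ` supp (cls (i - 1) (tgt (gtgt P) (i - 1) u))"
proof -
  obtain m where m: "i = Suc m" "tdim u \<le> m" using assms(4) by (cases i) auto
  have "tdim (xiS (gsrc P) (gtgt P) f u) \<le> i"
    using xiS_wf[OF wf_gsrc wf_gtgt assms(1-3)] m by simp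
  then show ?thesis
    using xiS_supp_cls_top[OF wf_gsrc wf_gtgt assms(1,2) m(2)] m src_triv tgt_triv by simp
qed

lemma supp_src_XiEta_step:
  assumes a: "a \<in> gens P" and i: "i \<le> gdim a"
    and IH: "0 < gdim a \<Longrightarrow>
      supp (cls i (src (gsrc (Tstep P)) i (xiT (gsrc P) (gtgt P) (gtgt P a)))) \<subseteq>
        insert Orig (XiEta ` supp (cls (i - 1) (tgt (gtgt P) (i - 1) (gtgt P a))))"
  shows "supp (cls i (src (gsrc (Tstep P)) i (Gen (XiEta a)))) \<subseteq>
      insert Orig (XiEta ` supp (cls (i - 1) (tgt (gtgt P) (i - 1) (Gen a))))"
proof -
  have "XiEta a \<in> gens (Tstep P)" using a by (simp add: gens_Tstep)
  with i have src_eq: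
      "src (gsrc (Tstep P)) i (Gen (XiEta a)) = src (gsrc (Tstep P)) i (gsrc (Tstep P) (XiEta a))"
    using src_Gen[OF wf_boundary_gsrc_Tstep] by simp
  show ?thesis
  proof (cases "gdim a = 0")
    case True
    then show ?thesis unfolding src_eq using src_triv[of "Gen Orig" i] by (simp add: gsrc_Tstep_XiEta)
  next
    case False
    with i have "\<not> gdim a \<le> i - 1" by linarith
    then have "tgt (gtgt P) (i - 1) (Gen a) = tgt (gtgt P) (i - 1) (gtgt P a)"
      using tgt_Gen[OF wf_gtgt a] by simp
    with False show ?thesis unfolding src_eq using IH by (simp add: gsrc_Tstep_XiEta)
  qed
qed

lemma supp_src_xiS_Comp:
  assumes u: "tm_gens (Comp p y x) \<subseteq> gens P" "wf_tm (Comp p y x)" "tdim (Comp p y x) < Suc f"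
    and i: "i \<le> tdim (Comp p y x)"
    and IHy: "supp (cls i (src (gsrc (Tstep P)) i (xiS (gsrc P) (gtgt P) (Suc f) y))) \<subseteq>
      insert Orig (XiEta ` supp (cls (i - 1) (tgt (gtgt P) (i - 1) y)))"
    and IHx: "supp (cls i (src (gsrc (Tstep P)) i (xiS (gsrc P) (gtgt P) (Suc f) x))) \<subseteq>
      insert Orig (XiEta ` supp (cls (i - 1) (tgt (gtgt P) (i - 1) x)))"
  shows "supp (cls i (src (gsrc (Tstep P)) i (xiS (gsrc P) (gtgt P) (Suc f) (Comp p y x)))) \<subseteq>
      insert Orig (XiEta ` supp (cls (i - 1) (tgt (gtgt P) (i - 1) (Comp p y x))))"
proof -
    define F where "F = whiskers (\<lambda>j. xiS (gsrc P) (gtgt P) f (src (gsrc P) j x))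
    (etaT (tgt (gtgt P) (Suc p) y)) [0..<p]"
  define X where "X = xiS (gsrc P) (gtgt P) (Suc f) x"
  define Y where "Y = xiS (gsrc P) (gtgt P) (Suc f) y"
  have xi_eq: "xiS (gsrc P) (gtgt P) (Suc f) (Comp p y x) = Comp (Suc p) (Comp p F X) Y"
    by (simp add: F_def X_def Y_def)
  have yx: "tm_gens y \<subseteq> gens P" "tm_gens x \<subseteq> gens P" "wf_tm y" "wf_tm x" "p < tdim y" "p < tdim x"
    "tdim y \<le> f" "tdim x \<le> f"
    using u by auto
  have whole: "tdim (Comp (Suc p) (Comp p F X) Y) = Suc (tdim (Comp p y x))"
      "tm_gens (Comp (Suc p) (Comp p F X) Y) \<subseteq> gens (Tstep P)"
    using xiS_wf[OF wf_gsrc wf_gtgt u] unfolding xi_eq by (auto simp: gens_Tstep)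
  have "tdim (xiS (gsrc P) (gtgt P) f (src (gsrc P) j x)) = Suc j" if "j \<in> set [0..<p]" for j
    using xiS_wf[OF wf_gsrc wf_gtgt] src_wf[OF wf_gsrc yx(2,4), of j] that yx by auto
  moreover have "tdim (etaT (tgt (gtgt P) (Suc p) y)) = Suc p"
    using tgt_wf[OF wf_gtgt yx(1,3), of "Suc p"] yx by simp
  ultimately have dim_F: "tdim F = Suc p"
    unfolding F_def by (subst tdim_whiskers) auto
  show ?thesis
  proof (cases "i \<le> Suc p")
    case True
    then have "src (gsrc (Tstep P)) i (Comp (Suc p) (Comp p F X) Y) = src (gsrc (Tstep P)) i Y"
      using whole i src_Comp[OF wf_boundary_gsrc_Tstep] by auto
    moreover have "tgt (gtgt P) (i - 1) (Comp p y x) = tgt (gtgt P) (i - 1) y"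
      using True i yx(5) tgt_Comp[OF wf_gtgt yx(1,2), of "i - 1" p] by auto
    ultimately show ?thesis unfolding xi_eq Y_def using IHy by simp
  next
    case False
    have "supp (cls i (src (gsrc (Tstep P)) i F)) = {}"
      using False dim_F src_triv[of F i] supp_cls_low_dim[of F i] by simp
    then have "supp (cls i (src (gsrc (Tstep P)) i (Comp (Suc p) (Comp p F X) Y))) \<subseteq>
        supp (cls i (src (gsrc (Tstep P)) i X)) \<union> supp (cls i (src (gsrc (Tstep P)) i Y))"
      using whole(2) supp_cls_src_Comp[OF wf_boundary_gsrc_Tstep, of "Comp p F X" Y i i "Suc p"]
        supp_cls_src_Comp[OF wf_boundary_gsrc_Tstep, of F X i i p] by auto
    moreover have "tgt (gtgt P) (i - 1) (Comp p y x) =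
        Comp p (tgt (gtgt P) (i - 1) y) (tgt (gtgt P) (i - 1) x)"
      using False i tgt_Comp[OF wf_gtgt yx(1,2), of "i - 1" p] by auto
    ultimately show ?thesis unfolding xi_eq X_def Y_def using IHx IHy by auto
  qed
qed

lemma supp_src_xiS_Id:
  assumes w: "tm_gens w \<subseteq> gens P" "wf_tm w" "tdim (tm.Id w) < Suc f"
    and i: "i \<le> tdim (tm.Id w)"
    and IH: "supp (cls i (src (gsrc (Tstep P)) i (xiS (gsrc P) (gtgt P) (Suc f) w))) \<subseteq>
      insert Orig (XiEta ` supp (cls (i - 1) (tgt (gtgt P) (i - 1) w)))"
  shows "supp (cls i (src (gsrc (Tstep P)) i (xiS (gsrc P) (gtgt P) (Suc f) (tm.Id w)))) \<subseteq>
      insert Orig (XiEta ` supp (cls (i - 1) (tgt (gtgt P) (i - 1) (tm.Id w))))"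
proof -
  have "tdim (xiS (gsrc P) (gtgt P) (Suc f) w) = Suc (tdim w)"
      "tm_gens (xiS (gsrc P) (gtgt P) (Suc f) w) \<subseteq> gens (Tstep P)"
    using xiS_wf[OF wf_gsrc wf_gtgt w(1,2), of "Suc f"] w(3) by (auto simp: gens_Tstep)
  then have "src (gsrc (Tstep P)) i (xiS (gsrc P) (gtgt P) (Suc f) (tm.Id w)) =
      src (gsrc (Tstep P)) i (xiS (gsrc P) (gtgt P) (Suc f) w)"
    using i src_Id[OF wf_boundary_gsrc_Tstep] by simp
  moreover have "\<not> tdim (tm.Id w) \<le> i - 1" using i by simp
  then have "tgt (gtgt P) (i - 1) (tm.Id w) = tgt (gtgt P) (i - 1) w"
    using tgt_Id[OF wf_gtgt w(1)] by simp
  ultimately show ?thesis using IH by simp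
qed

text \<open>Shadow of the cell equation s_i(xi_u) = xi_{t_{i-1}(u)} (= o for i = 0), seen through
  i-dimensional supports.\<close>

lemma supp_src_xiS:
  assumes "tm_gens u \<subseteq> gens P" "wf_tm u" "tdim u < f"
  shows "supp (cls i (src (gsrc (Tstep P)) i (xiS (gsrc P) (gtgt P) f u))) \<subseteq>
      insert Orig (XiEta ` supp (cls (i - 1) (tgt (gtgt P) (i - 1) u)))"
proof -
  have "tdim u \<le> N \<Longrightarrow> tm_gens u \<subseteq> gens P \<Longrightarrow> wf_tm u \<Longrightarrow> tdim u < f \<Longrightarrow>
    supp (cls i (src (gsrc (Tstep P)) i (xiS (gsrc P) (gtgt P) f u))) \<subseteq>
      insert Orig (XiEta ` supp (cls (i - 1) (tgt (gtgt P) (i - 1) u)))" for N u f i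
  proof (induction N arbitrary: u f i rule: less_induct)
    case (less N)
    from less.prems show ?case
    proof (induction u arbitrary: f i)
      case (Gen b)
      show ?case
      proof (cases "gdim b < i")
        case True
        then show ?thesis using supp_src_xiS_top[OF Gen(2-4)] by auto
      next
        case False
        obtain f' where "f = Suc f'" using Gen.prems by (cases f) auto
        moreover have "supp (cls i (src (gsrc (Tstep P)) i (Gen (XiEta b)))) \<subseteq>
            insert Orig (XiEta ` supp (cls (i - 1) (tgt (gtgt P) (i - 1) (Gen b))))"
        proof (rule supp_src_XiEta_step)
          assume "0 < gdim b"
          then show "supp (cls i (src (gsrc (Tstep P)) i (xiT (gsrc P) (gtgt P) (gtgt P b)))) \<subseteq>
              insert Orig (XiEta ` supp (cls (i - 1) (tgt (gtgt P) (i - 1) (gtgt P b))))"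
            using less.IH[of "gdim b - 1" "gtgt P b"] wf_boundaryD[OF wf_gtgt, of b] Gen.prems
            by (simp add: xiT_def)
        qed (use Gen.prems False in auto)
        ultimately show ?thesis by simp
      qed
    next
      case (Id w)
      show ?case
      proof (cases "tdim (tm.Id w) < i")
        case True
        then show ?thesis using supp_src_xiS_top[OF Id.prems(2-4)] by auto
      next
        case False
        obtain f' where f: "f = Suc f'" using Id.prems by (cases f) auto
        show ?thesis unfolding f
        proof (rule supp_src_xiS_Id)
          show "i \<le> tdim (tm.Id w)" using False by (simp only: not_less)
        qed (use Id f in auto)
      qed
    next
      case (Comp p y x)
      show ?case
      proof (cases "tdim (Comp p y x) < i")
        case True
        then show ?thesis using supp_src_xiS_top[OF Comp.prems(2-4)] by auto
      next
        case False
        obtain f' where f: "f = Suc f'" using Comp.prems by (cases f) auto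
        show ?thesis unfolding f
        proof (rule supp_src_xiS_Comp)
          show "i \<le> tdim (Comp p y x)" using False by (simp only: not_less)
        qed (use Comp f in auto)
      qed
    qed
  qed
  with assms show ?thesis by blast
qed

lemma supp_src_XiEta:
  assumes "a \<in> gens P" "i \<le> gdim a"
  shows "supp (cls i (src (gsrc (Tstep P)) i (Gen (XiEta a)))) \<subseteq>
      insert Orig (XiEta ` supp (cls (i - 1) (tgt (gtgt P) (i - 1) (Gen a))))"
  using supp_src_xiS[of "Gen a" "Suc (gdim a)" i] assms by simp

text \<open>The target of xi_{eta a} is eta a *_0 xi_{s_0 a} *_1 ... *_{k-1} xi_{s_{k-1} a}; in
  dimension i only eta a and the top generators of xi_{s_{i-1} a} survive.\<close>

lemma supp_tgt_XiEta:
  assumes a: "a \<in> gens P" and i: "i \<le> gdim a"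
  shows "supp (cls i (tgt (gtgt (Tstep P)) i (Gen (XiEta a)))) \<subseteq>
      range Eta \<union> XiEta ` supp (cls (i - 1) (src (gsrc P) (i - 1) (Gen a)))"
proof -
    let ?c = "\<lambda>j. xiT (gsrc P) (gtgt P) (src (gsrc P) j (Gen a))"
  have "XiEta a \<in> gens (Tstep P)" "Eta a \<in> gens (Tstep P)" using a by (simp_all add: gens_Tstep)
  then have tgt_eq: "tgt (gtgt (Tstep P)) i (Gen (XiEta a)) =
      tgt (gtgt (Tstep P)) i (whiskers ?c (Gen (Eta a)) [0..<gdim a])"
    using tgt_Gen[OF wf_boundary_gtgt_Tstep] i by (simp add: gtgt_Tstep_XiEta)
  have "supp (cls i (tgt (gtgt (Tstep P)) i (whiskers ?c (Gen (Eta a)) [0..<gdim a]))) \<subseteq>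
      supp (cls i (tgt (gtgt (Tstep P)) i (Gen (Eta a)))) \<union>
      (\<Union>j\<in>{j\<in>set [0..<gdim a]. j < i}. supp (cls i (?c j)))"
    using \<open>Eta a \<in> gens (Tstep P)\<close> xiT_src_wf[OF a]
    by (intro supp_cls_tgt_whiskers[OF wf_boundary_gtgt_Tstep]) auto
  moreover have "tgt (gtgt (Tstep P)) i (etaT (Gen a)) = etaT (tgt (gtgt P) i (Gen a))"
    by (rule tgt_etaT) (simp add: gtgt_Tstep_Eta)
  then have "supp (cls i (tgt (gtgt (Tstep P)) i (Gen (Eta a)))) \<subseteq> range Eta"
    by auto
  moreover have "supp (cls i (?c j)) \<subseteq> XiEta ` supp (cls (i - 1) (src (gsrc P) (i - 1) (Gen a)))"
    if "j < gdim a" "j < i" for j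
  proof (cases "Suc j = i")
    case True
    have "tdim (src (gsrc P) j (Gen a)) = j" "wf_tm (src (gsrc P) j (Gen a))"
      "tm_gens (src (gsrc P) j (Gen a)) \<subseteq> gens P"
      using src_wf[OF wf_gsrc, of "Gen a" j] a that by auto
    then show ?thesis
      using xiS_supp_cls_top[OF wf_gsrc wf_gtgt, of "src (gsrc P) j (Gen a)" j]
      by (simp add: xiT_def True[symmetric])
  next
    case False
    then show ?thesis using xiT_src_wf[OF a that(1)] that supp_cls_low_dim[of "?c j" i] by simp
  qed
  ultimately show ?thesis unfolding tgt_eq by fastforce
qed

lemma atomic_Tstep:
  assumes "atomic P"
  shows "atomic (Tstep P)"
  unfolding atomic_def
proof (intro ballI allI impI)
  fix x i assume x: "x \<in> gens (Tstep P)" and i: "i < gdim x"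
  then consider a where "x = Eta a" "a \<in> gens P" | a where "x = XiEta a" "a \<in> gens P"
    by (auto simp: gens_Tstep)
  then show "supp (cls i (src (gsrc (Tstep P)) i (Gen x))) \<inter>
      supp (cls i (tgt (gtgt (Tstep P)) i (Gen x))) = {}"
  proof cases
    case 1
    have "src (gsrc (Tstep P)) i (etaT (Gen a)) = etaT (src (gsrc P) i (Gen a))"
      by (rule src_etaT) (simp add: gsrc_Tstep_Eta)
    moreover have "tgt (gtgt (Tstep P)) i (etaT (Gen a)) = etaT (tgt (gtgt P) i (Gen a))"
      by (rule tgt_etaT) (simp add: gtgt_Tstep_Eta)
    moreover have "supp (cls i (src (gsrc P) i (Gen a))) \<inter> supp (cls i (tgt (gtgt P) i (Gen a))) = {}"
      using atomicD[OF assms] 1 i by simp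
    ultimately show ?thesis using 1 by (auto simp: image_Int[symmetric])
  next
    case 2
    have "i \<le> gdim a" using i 2 by simp
    show ?thesis
    proof (rule equals0I)
      fix g
      assume g: "g \<in> supp (cls i (src (gsrc (Tstep P)) i (Gen x))) \<inter>
          supp (cls i (tgt (gtgt (Tstep P)) i (Gen x)))"
      then obtain b where b: "g = XiEta b"
          "b \<in> supp (cls (i - 1) (tgt (gtgt P) (i - 1) (Gen a)))"
          "b \<in> supp (cls (i - 1) (src (gsrc P) (i - 1) (Gen a)))"
        using supp_src_XiEta[OF 2(2) \<open>i \<le> gdim a\<close>] supp_tgt_XiEta[OF 2(2) \<open>i \<le> gdim a\<close>] 2(1)
        by blast
      have "gdim g = i" using g gdim_supp_cls by blast
      with b have "i - 1 < gdim a" using \<open>i \<le> gdim a\<close> by simp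
      then show False using atomicD[OF assms 2(2)] b(2,3) by blast
    qed
  qed
qed

end

lemma wf_atomic_Tstep_iterate:
  "wf_polygraph ((Tstep ^^ m) empty_polygraph) \<and> atomic ((Tstep ^^ m) empty_polygraph)"
proof (induction m)
  case 0
  show ?case
    by (simp add: wf_polygraph_def wf_boundary_def atomic_def empty_polygraph_def gens_def)
next
  case (Suc m)
  then show ?case
    using wf_polygraph.wf_polygraph_Tstep wf_polygraph.atomic_Tstep by simp
qed

theorem mainTheorem12:
  fixes n :: int
  assumes "n \<ge> -1"
  shows "atomic (O_polygraph n)"
  using wf_atomic_Tstep_iterate[of "nat (n + 1)"] by (simp add: O_polygraph_def)

end
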